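(* Let $\Gamma^i_k$ and $\Gamma^j_k$ be invertible (positive definite) covariance matrices and $\omega\in[0,1]$. The division of Gaussian densities \[ \frac{\mathcal{N}(\mathbf{x}_k; \hat{\mathbf{x}}^{i}_k, \Gamma^{i}_k)\, \mathcal{N}(\mathbf{x}_k; \hat{\mathbf{x}}^{j}_k, \Gamma^{j}_k)}{\mathcal{N}(\mathbf{x}_k; \hat{\mathbf{x}}^{eq}_k, \Gamma^{eq}_k)} \propto \mathcal{N}(\mathbf{x}_k; \hat{\mathbf{x}}^f_k, \Gamma^f_k), \] where $(\hat{\mathbf{x}}^{eq}_k,\Gamma^{eq}_k)$ is the moment-matched Gaussian approximation of the mixture $\omega\,\mathcal{N}(\hat{\mathbf{x}}^i_k,\Gamma^i_k)+(1-\omega)\,\mathcal{N}(\hat{\mathbf{x}}^j_k,\Gamma^j_k)$, is always valid; that is, $\Gamma^{eq}_k - \left({\Gamma^{i}_k}^{-1} + {\Gamma^{j}_k}^{-1}\right)^{-1} \succ \mathbf{0}$, so that $\Gamma^f_k = \left({\Gamma^{i}_k}^{-1} + {\Gamma^{j}_k}^{-1} - {\Gamma^{eq}_k}^{-1}\right)^{-1}$ is a valid covariance.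
   Context: Harmonic mean density (HMD) fusion of two local Gaussian track densities $p(\mathbf{x}_k|\mathbf{z}^i_k)=\mathcal{N}(\mathbf{x}_k;\hat{\mathbf{x}}^i_k,\Gamma^i_k)$ and $p(\mathbf{x}_k|\mathbf{z}^j_k)=\mathcal{N}(\mathbf{x}_k;\hat{\mathbf{x}}^j_k,\Gamma^j_k)$: the fused density is their product divided by the weighted mixture of the two, and the denominator mixture is approximated by a single Gaussian with mean $\hat{\mathbf{x}}^{eq}_k=\omega\hat{\mathbf{x}}^i_k+(1-\omega)\hat{\mathbf{x}}^j_k$ and covariance $\Gamma^{eq}_k=\omega[\Gamma^i_k+(\hat{\mathbf{x}}^{eq}_k-\hat{\mathbf{x}}^i_k)(\hat{\mathbf{x}}^{eq}_k-\hat{\mathbf{x}}^i_k)^T]+(1-\omega)[\Gamma^j_k+(\hat{\mathbf{x}}^{eq}_k-\hat{\mathbf{x}}^j_k)(\hat{\mathbf{x}}^{eq}_k-\hat{\mathbf{x}}^j_k)^T]$. The fused mean is $\hat{\mathbf{x}}^f_k=\Gamma^f_k[{\Gamma^i_k}^{-1}\hat{\mathbf{x}}^i_k+{\Gamma^j_k}^{-1}\hat{\mathbf{x}}^j_k-{\Gamma^{eq}_k}^{-1}\hat{\mathbf{x}}^{eq}_k]$. Division of a Gaussian (here the product density with covariance $\Gamma^{num}_k=({\Gamma^i_k}^{-1}+{\Gamma^j_k}^{-1})^{-1}$) by another Gaussian yields a valid Gaussian only if the divisor's covariance dominates, $\Gamma^{eq}_k \succeq \Gamma^{num}_k$. *)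

theory Defs
  imports "HOL-Analysis.Analysis"
begin

definition pos_def :: "real^'n^'n \<Rightarrow> bool" where
  "pos_def A \<longleftrightarrow> transpose A = A \<and> (\<forall>x. x \<noteq> 0 \<longrightarrow> x \<bullet> (A *v x) > 0)"

definition outer :: "real^'n \<Rightarrow> real^'n \<Rightarrow> real^'n^'n" where
  "outer v w = (\<chi> i j. v $ i * w $ j)"

text \<open>Moment-matched mean and covariance of the mixture
  w N(xi,Gi) + (1-w) N(xj,Gj).\<close>
definition eq_mean :: "real \<Rightarrow> real^'n \<Rightarrow> real^'n \<Rightarrow> real^'n" where
  "eq_mean w xi xj = w *\<^sub>R xi + (1 - w) *\<^sub>R xj"

definition eq_cov :: "real \<Rightarrow> real^'n \<Rightarrow> real^'n^'n \<Rightarrow> real^'n \<Rightarrow> real^'n^'n \<Rightarrow> real^'n^'n" where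
  "eq_cov w xi Gi xj Gj =
     (let xe = eq_mean w xi xj in
        w *\<^sub>R (Gi + outer (xe - xi) (xe - xi)) + (1 - w) *\<^sub>R (Gj + outer (xe - xj) (xe - xj)))"

end

theory Submission
  imports Defs
begin

text \<open>Write \<open>A \<succ> B\<close> for \<open>pos_def (A - B)\<close>, and \<open>H = (Gi\<^sup>-\<^sup>1 + Gj\<^sup>-\<^sup>1)\<^sup>-\<^sup>1\<close>.
  Matrix inversion is antitone on positive definite matrices: for \<open>Y\<close> positive
  definite, \<open>z\<^sup>T Y\<^sup>-\<^sup>1 z = max\<^sub>u (2 u\<^sup>T z - u\<^sup>T Y u)\<close>, and evaluating at the maximiser
  \<open>u = X\<^sup>-\<^sup>1 z\<close> of the \<open>X\<close>-problem gives \<open>z\<^sup>T Y\<^sup>-\<^sup>1 z > z\<^sup>T X\<^sup>-\<^sup>1 z\<close> whenever \<open>X \<succ> Y\<close>.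
  Since \<open>H\<^sup>-\<^sup>1 \<succ> Gi\<^sup>-\<^sup>1\<close> and \<open>H\<^sup>-\<^sup>1 \<succ> Gj\<^sup>-\<^sup>1\<close>, antitonicity gives \<open>Gi \<succ> H\<close> and \<open>Gj \<succ> H\<close>.
  The moment-matched covariance is affine in \<open>(Gi, Gj)\<close> with weights summing to one,
  so \<open>\<Gamma>\<^sup>e\<^sup>q - H\<close> is the moment-matched covariance built from \<open>Gi - H\<close> and \<open>Gj - H\<close>:
  a convex combination of positive definite matrices plus rank-one positive
  semidefinite terms, hence \<open>\<Gamma>\<^sup>e\<^sup>q \<succ> H\<close>. Antitonicity once more gives \<open>H\<^sup>-\<^sup>1 \<succ> (\<Gamma>\<^sup>e\<^sup>q)\<^sup>-\<^sup>1\<close>.\<close>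

lemma transpose_add: "transpose (A + B) = transpose A + transpose B"
  by (simp add: vec_eq_iff transpose_def)

lemma transpose_diff: "transpose (A - B) = transpose A - transpose (B :: 'a::ab_group_add^'n^'m)"
  by (simp add: vec_eq_iff transpose_def)

lemma transpose_outer: "transpose (outer v v) = outer v v"
  by (simp add: vec_eq_iff transpose_def outer_def mult.commute)

lemma outer_mult_vector: "outer v v *v x = (v \<bullet> x) *\<^sub>R v"
  by (simp add: vec_eq_iff outer_def matrix_vector_mult_def inner_vec_def
      sum_distrib_left mult_ac)

lemma matrix_inv_right:
  fixes A :: "'a::field^'n^'n"
  assumes "invertible A"
  shows "A ** matrix_inv A = mat 1"
proof -
  have "\<exists>A'. A ** A' = mat 1 \<and> A' ** A = mat 1"
    using assms by (simp add: invertible_def)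
  then show ?thesis
    unfolding matrix_inv_def by (rule someI2_ex) simp
qed

lemma matrix_inv_left:
  fixes A :: "'a::field^'n^'n"
  assumes "invertible A"
  shows "matrix_inv A ** A = mat 1"
  using matrix_inv_right[OF assms] matrix_left_right_inverse by blast

lemma matrix_inv_unique:
  fixes A B :: "'a::field^'n^'n"
  assumes "A ** B = mat 1"
  shows "matrix_inv A = B"
proof -
  have "invertible A"
    using assms invertible_right_inverse by blast
  have "matrix_inv A = matrix_inv A ** (A ** B)"
    using assms by simp
  also have "\<dots> = B"
    by (simp add: matrix_mul_assoc matrix_inv_left[OF \<open>invertible A\<close>])
  finally show ?thesis .
qed

lemma matrix_inv_matrix_inv:
  fixes A :: "'a::field^'n^'n"
  assumes "invertible A"
  shows "matrix_inv (matrix_inv A) = A"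
  using matrix_inv_unique matrix_inv_left[OF assms] by blast

lemma matrix_inv_symmetric:
  fixes A :: "'a::field^'n^'n"
  assumes "invertible A" and "transpose A = A"
  shows "transpose (matrix_inv A) = matrix_inv A"
proof -
  have "A ** transpose (matrix_inv A) = mat 1"
    using matrix_transpose_mul[of "matrix_inv A" A] matrix_inv_left[OF assms(1)] assms(2)
    by simp
  then show ?thesis
    using matrix_inv_unique by metis
qed

lemma matrix_vector_mult_matrix_inv:
  fixes A :: "'a::field^'n^'n"
  assumes "invertible A"
  shows "A *v (matrix_inv A *v z) = z"
  by (simp add: matrix_vector_mul_assoc matrix_inv_right[OF assms])

definition quad_form :: "real^'n^'n \<Rightarrow> real^'n \<Rightarrow> real" where
  "quad_form A x = x \<bullet> (A *v x)"

lemma quad_form_add: "quad_form (A + B) x = quad_form A x + quad_form B x"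
  by (simp add: quad_form_def matrix_vector_mult_add_rdistrib inner_add_right)

lemma quad_form_diff: "quad_form (A - B) x = quad_form A x - quad_form B x"
  by (simp add: quad_form_def matrix_vector_mult_diff_rdistrib inner_diff_right)

lemma quad_form_scaleR: "quad_form (c *\<^sub>R A) x = c * quad_form A x"
  by (simp add: quad_form_def flip: scaleR_matrix_vector_assoc)

lemma quad_form_outer: "quad_form (outer v v) x = (v \<bullet> x)\<^sup>2"
  by (simp add: quad_form_def outer_mult_vector power2_eq_square inner_commute)

lemma pos_def_iff_quad_form:
  "pos_def A \<longleftrightarrow> transpose A = A \<and> (\<forall>x. x \<noteq> 0 \<longrightarrow> quad_form A x > 0)"
  by (simp add: pos_def_def quad_form_def)

lemma pos_def_quad_form_nonneg: "pos_def A \<Longrightarrow> quad_form A x \<ge> 0"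
  by (cases "x = 0") (auto simp: pos_def_iff_quad_form quad_form_def less_imp_le)

lemma pos_def_invertible:
  assumes "pos_def A"
  shows "invertible A"
proof -
  have "\<forall>x. A *v x = 0 \<longrightarrow> x = 0"
    using assms by (auto simp: pos_def_def)
  then show ?thesis
    using matrix_left_invertible_ker invertible_left_inverse by blast
qed

lemma pos_def_add: "pos_def A \<Longrightarrow> pos_def B \<Longrightarrow> pos_def (A + B)"
  by (auto simp: pos_def_iff_quad_form quad_form_add transpose_add intro: add_pos_pos)

lemma pos_def_add_outer: "pos_def A \<Longrightarrow> pos_def (A + outer v v)"
  by (auto simp: pos_def_iff_quad_form quad_form_add quad_form_outer transpose_add
      transpose_outer intro: add_pos_nonneg)

lemma pos_def_convex_comb:
  fixes A B :: "real^'n^'n"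
  assumes "pos_def A" and "pos_def B" and "0 \<le> w" and "w \<le> 1"
  shows "pos_def (w *\<^sub>R A + (1 - w) *\<^sub>R B)"
  unfolding pos_def_iff_quad_form
proof (intro conjI allI impI)
  show "transpose (w *\<^sub>R A + (1 - w) *\<^sub>R B) = w *\<^sub>R A + (1 - w) *\<^sub>R B"
    using assms by (simp add: pos_def_def transpose_add transpose_scalar)
  fix x :: "real^'n"
  assume "x \<noteq> 0"
  then have "quad_form A x > 0" "quad_form B x > 0"
    using assms by (simp_all add: pos_def_iff_quad_form)
  moreover have "w > 0 \<or> 1 - w > 0"
    by linarith
  ultimately show "quad_form (w *\<^sub>R A + (1 - w) *\<^sub>R B) x > 0"
    using assms by (auto simp: quad_form_add quad_form_scaleR
        intro: add_pos_nonneg add_nonneg_pos)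
qed

lemma quad_form_matrix_inv:
  assumes "invertible A"
  shows "quad_form (matrix_inv A) z = quad_form A (matrix_inv A *v z)"
  by (simp add: quad_form_def matrix_vector_mult_matrix_inv[OF assms] inner_commute)

lemma pos_def_matrix_inv:
  fixes A :: "real^'n^'n"
  assumes "pos_def A"
  shows "pos_def (matrix_inv A)"
  unfolding pos_def_iff_quad_form
proof (intro conjI allI impI)
  have "invertible A"
    using pos_def_invertible assms by blast
  then show "transpose (matrix_inv A) = matrix_inv A"
    using matrix_inv_symmetric assms by (auto simp: pos_def_def)
  fix z :: "real^'n"
  assume "z \<noteq> 0"
  then have "matrix_inv A *v z \<noteq> 0"
    using matrix_vector_mult_matrix_inv[OF \<open>invertible A\<close>, of z] by auto
  then show "quad_form (matrix_inv A) z > 0"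
    using assms by (simp add: quad_form_matrix_inv[OF \<open>invertible A\<close>] pos_def_iff_quad_form)
qed

lemma quad_form_matrix_inv_ge:
  assumes "pos_def A"
  shows "2 * (u \<bullet> z) - quad_form A u \<le> quad_form (matrix_inv A) z"
proof -
  have "invertible A" and sym: "transpose A = A"
    using assms pos_def_invertible by (auto simp: pos_def_def)
  define v where "v = matrix_inv A *v z"
  have Av: "A *v v = z"
    unfolding v_def using matrix_vector_mult_matrix_inv[OF \<open>invertible A\<close>] .
  have "v \<bullet> (A *v u) = u \<bullet> z"
    using dot_lmul_matrix[of v A u] sym Av
    by (metis inner_commute transpose_matrix_vector)
  then have "quad_form A (u - v) = quad_form A u - 2 * (u \<bullet> z) + quad_form A v"
    by (simp add: quad_form_def Av matrix_vector_mult_diff_distrib inner_diff_left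
        inner_diff_right inner_commute)
  moreover have "quad_form A (u - v) \<ge> 0"
    using pos_def_quad_form_nonneg assms by blast
  moreover have "quad_form (matrix_inv A) z = quad_form A v"
    unfolding v_def by (rule quad_form_matrix_inv[OF \<open>invertible A\<close>])
  ultimately show ?thesis
    by linarith
qed

lemma pos_def_matrix_inv_antimono:
  fixes A B :: "real^'n^'n"
  assumes A: "pos_def A" and B: "pos_def B" and AB: "pos_def (A - B)"
  shows "pos_def (matrix_inv B - matrix_inv A)"
  unfolding pos_def_iff_quad_form
proof (intro conjI allI impI)
  show "transpose (matrix_inv B - matrix_inv A) = matrix_inv B - matrix_inv A"
    using pos_def_matrix_inv[OF A] pos_def_matrix_inv[OF B] by (simp add: pos_def_def transpose_diff)
  have "invertible A"
    using pos_def_invertible A by blast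
  fix z :: "real^'n"
  assume "z \<noteq> 0"
  define u where "u = matrix_inv A *v z"
  have Au: "A *v u = z"
    unfolding u_def using matrix_vector_mult_matrix_inv[OF \<open>invertible A\<close>] .
  then have "u \<noteq> 0"
    using \<open>z \<noteq> 0\<close> by auto
  then have "quad_form B u < quad_form A u"
    using AB by (simp add: pos_def_iff_quad_form quad_form_diff)
  moreover have "u \<bullet> z = quad_form A u" and "quad_form (matrix_inv A) z = quad_form A u"
    using Au by (simp_all add: quad_form_def u_def quad_form_matrix_inv[OF \<open>invertible A\<close>]
        inner_commute)
  moreover have "2 * (u \<bullet> z) - quad_form B u \<le> quad_form (matrix_inv B) z"
    using quad_form_matrix_inv_ge[OF B] .
  ultimately show "quad_form (matrix_inv B - matrix_inv A) z > 0"
    by (simp add: quad_form_diff)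
qed

lemma pos_def_diff_parallel_sum:
  assumes "pos_def A" and "pos_def B"
  shows "pos_def (A - matrix_inv (matrix_inv A + matrix_inv B))"
proof -
  have "pos_def (matrix_inv A)" "pos_def (matrix_inv B)"
    using assms pos_def_matrix_inv by blast+
  then have "pos_def (matrix_inv (matrix_inv A) - matrix_inv (matrix_inv A + matrix_inv B))"
    by (intro pos_def_matrix_inv_antimono pos_def_add) simp_all
  then show ?thesis
    using assms(1) by (simp add: matrix_inv_matrix_inv pos_def_invertible)
qed

lemma eq_cov_diff:
  "eq_cov w xi Gi xj Gj - H = eq_cov w xi (Gi - H) xj (Gj - H)"
  by (simp add: eq_cov_def Let_def algebra_simps)

lemma pos_def_eq_cov:
  assumes "pos_def Gi" and "pos_def Gj" and "0 \<le> w" and "w \<le> 1"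
  shows "pos_def (eq_cov w xi Gi xj Gj)"
  unfolding eq_cov_def Let_def
  using assms by (intro pos_def_convex_comb pos_def_add_outer)

theorem proposition2:
  fixes Gi Gj :: "real^'n^'n" and xi xj :: "real^'n" and w :: real
  assumes "pos_def Gi" and "pos_def Gj" and "0 \<le> w" and "w \<le> 1"
  shows "pos_def (eq_cov w xi Gi xj Gj - matrix_inv (matrix_inv Gi + matrix_inv Gj))
       \<and> pos_def (matrix_inv Gi + matrix_inv Gj - matrix_inv (eq_cov w xi Gi xj Gj))"
proof
  define M where "M = matrix_inv Gi + matrix_inv Gj"
  define C where "C = eq_cov w xi Gi xj Gj"
  have "pos_def M"
    unfolding M_def using assms by (intro pos_def_add pos_def_matrix_inv)
  then have H: "pos_def (matrix_inv M)"
    by (rule pos_def_matrix_inv)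
  have "pos_def (Gi - matrix_inv M)" "pos_def (Gj - matrix_inv M)"
    unfolding M_def using pos_def_diff_parallel_sum assms add.commute by metis+
  then show CH: "pos_def (C - matrix_inv M)"
    unfolding C_def eq_cov_diff using assms by (intro pos_def_eq_cov)
  then have "pos_def C"
    using pos_def_add[OF H CH] by simp
  then have "pos_def (matrix_inv (matrix_inv M) - matrix_inv C)"
    using H CH by (rule pos_def_matrix_inv_antimono)
  then show "pos_def (M - matrix_inv C)"
    using \<open>pos_def M\<close> by (simp add: matrix_inv_matrix_inv pos_def_invertible)
qed

end
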